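(* Let $P$ be a poset with an $\mathbb{R}$-action $\Lambda$. Let $I,J$ be intervals of $P$ and $\epsilon\ge0$ with $I\subseteq\mathrm{Ex}^\Lambda_\epsilon(J)$ and $J\subseteq\mathrm{Ex}^\Lambda_\epsilon(I)$. Then: - $\Omega(I,\Lambda_{-\epsilon}(J))$ equals the set of all connected components of $I\cap\Lambda_{-\epsilon}(J)$; - $\Omega(J,\Lambda_{-\epsilon}(I))$ equals the set of all connected components of $J\cap\Lambda_{-\epsilon}(I)$.
   Context: An interval of a poset $P$ is a nonempty subset that is convex ($p,q\in I$, $p\le r\le q$ imply $r\in I$) and connected (any two elements are joined by a finite sequence of elements of the subset with consecutive ones comparable). Connected components of a subset are its maximal connected subsets in this sense. For $A\subseteq P$ nonempty, $A^\uparrow=\{p:\exists a\in A,\ a\le p\}$ and $A^\downarrow=\{p:\exists a\in A,\ p\le a\}$; $\emptyset^\uparrow=\emptyset^\downarrow=P$. An $\mathbb{R}$-action on $P$ is a family $\{\Lambda_\epsilon\}_{\epsilon\ge0}$ of poset automorphisms with $p\le\Lambda_\epsilon(p)$, $\Lambda_0=\mathrm{id}$ and $\Lambda_\epsilon\Lambda_\zeta=\Lambda_{\epsilon+\zeta}$. Write $\Lambda_{-\epsilon}=\Lambda_\epsilon^{-1}$, and $\Lambda_{-\epsilon}(J)$ for the image of $J$. $\mathrm{Ex}^\Lambda_\epsilon(A)=\Lambda_\epsilon^{-1}(A)^\uparrow\cap\Lambda_\epsilon(A)^\downarrow$, where $\Lambda_\epsilon^{-1}(A)$ is the preimage. For intervals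 $I,J$, $\Omega(I,J)$ is the set of connected components $C$ of $I\cap J$ satisfying $I\cap C^\downarrow\subseteq C$ and $J\cap C^\uparrow\subseteq C$. *)

theory Defs
  imports Complex_Main
begin

definition comparable :: "'a::order \<Rightarrow> 'a \<Rightarrow> bool" where
  "comparable p q \<longleftrightarrow> p \<le> q \<or> q \<le> p"

definition connected_in :: "'a::order set \<Rightarrow> 'a \<Rightarrow> 'a \<Rightarrow> bool" where
  "connected_in S p q \<longleftrightarrow> p \<in> S \<and> q \<in> S \<and>
     (\<lambda>x y. x \<in> S \<and> y \<in> S \<and> comparable x y)\<^sup>*\<^sup>* p q"

definition poset_connected :: "'a::order set \<Rightarrow> bool" where
  "poset_connected S \<longleftrightarrow> (\<forall>p\<in>S. \<forall>q\<in>S. connected_in S p q)"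

definition poset_convex :: "'a::order set \<Rightarrow> bool" where
  "poset_convex S \<longleftrightarrow> (\<forall>p\<in>S. \<forall>q\<in>S. \<forall>r. p \<le> r \<and> r \<le> q \<longrightarrow> r \<in> S)"

definition is_interval :: "'a::order set \<Rightarrow> bool" where
  "is_interval I \<longleftrightarrow> I \<noteq> {} \<and> poset_convex I \<and> poset_connected I"

definition components :: "'a::order set \<Rightarrow> 'a set set" where
  "components A = {C. C \<noteq> {} \<and> C \<subseteq> A \<and> poset_connected C \<and>
      (\<forall>D. C \<subseteq> D \<and> D \<subseteq> A \<and> poset_connected D \<longrightarrow> D = C)}"

definition up_set :: "'a::order set \<Rightarrow> 'a set" where
  "up_set A = (if A = {} then UNIV else {p. \<exists>a\<in>A. a \<le> p})"

definition down_set :: "'a::order set \<Rightarrow> 'a set" where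
  "down_set A = (if A = {} then UNIV else {p. \<exists>a\<in>A. p \<le> a})"

definition poset_automorphism :: "('a::order \<Rightarrow> 'a) \<Rightarrow> bool" where
  "poset_automorphism f \<longleftrightarrow> bij f \<and> (\<forall>p q. p \<le> q \<longleftrightarrow> f p \<le> f q)"

text \<open>An R-action: Lam e for e \<ge> 0; values at negative e are irrelevant.\<close>
definition R_action :: "(real \<Rightarrow> 'a::order \<Rightarrow> 'a) \<Rightarrow> bool" where
  "R_action Lam \<longleftrightarrow>
     (\<forall>e\<ge>0. poset_automorphism (Lam e)) \<and>
     (\<forall>e\<ge>0. \<forall>p. p \<le> Lam e p) \<and>
     Lam 0 = id \<and>
     (\<forall>e\<ge>0. \<forall>z\<ge>0. Lam e \<circ> Lam z = Lam (e + z))"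

definition Ex :: "(real \<Rightarrow> 'a::order \<Rightarrow> 'a) \<Rightarrow> real \<Rightarrow> 'a set \<Rightarrow> 'a set" where
  "Ex Lam e A = up_set (Lam e -` A) \<inter> down_set (Lam e ` A)"

definition Omega :: "'a::order set \<Rightarrow> 'a set \<Rightarrow> 'a set set" where
  "Omega I J = {C \<in> components (I \<inter> J).
      I \<inter> down_set C \<subseteq> C \<and> J \<inter> up_set C \<subseteq> C}"

end

theory Submission
  imports Defs
begin

text \<open>Write \<open>K = \<Lambda>\<^sub>\<epsilon>\<inverse>(J)\<close>. The hypotheses say that \<open>I\<close> lies above \<open>K\<close> and \<open>K\<close> lies below \<open>I\<close>.
  Let \<open>C\<close> be a component of \<open>I \<inter> K\<close>. An element of \<open>I\<close> below some \<open>c \<in> C\<close> is also above some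
  element of \<open>K\<close>, so it lies in \<open>K\<close> by convexity; being comparable with \<open>c\<close>, it is absorbed by
  the component \<open>C\<close>. Dually, an element of \<open>K\<close> above \<open>C\<close> lies below some element of \<open>I\<close> and
  is absorbed. Hence every component satisfies the two closure conditions defining \<open>\<Omega>\<close>.\<close>

lemma poset_connected_insert:
  assumes C: "poset_connected C" and c: "c \<in> C" and xc: "comparable x c"
  shows "poset_connected (insert x C)"
proof -
  let ?R = "\<lambda>a b. a \<in> insert x C \<and> b \<in> insert x C \<and> comparable a b"
  have in_C: "?R\<^sup>*\<^sup>* p q" if "p \<in> C" "q \<in> C" for p q
  proof -
    have "(\<lambda>a b. a \<in> C \<and> b \<in> C \<and> comparable a b)\<^sup>*\<^sup>* p q"
      using C that unfolding poset_connected_def connected_in_def by blast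
    then show ?thesis by (rule mono_rtranclp[rule_format, rotated]) auto
  qed
  have to_c: "?R\<^sup>*\<^sup>* p c" if "p \<in> insert x C" for p
    using that in_C[OF _ c] c xc by auto
  have from_c: "?R\<^sup>*\<^sup>* c q" if "q \<in> insert x C" for q
    using that in_C[OF c] c xc by (auto simp: comparable_def)
  show ?thesis
    unfolding poset_connected_def connected_in_def
    using to_c from_c by (blast intro: rtranclp_trans)
qed

lemma components_absorb_comparable:
  assumes C: "C \<in> components A" and x: "x \<in> A" and c: "c \<in> C" and xc: "comparable x c"
  shows "x \<in> C"
proof -
  have "poset_connected (insert x C)"
    using C c xc by (intro poset_connected_insert) (auto simp: components_def)
  moreover have "insert x C \<subseteq> A" using C x by (auto simp: components_def)
  ultimately have "insert x C = C" using C unfolding components_def by blast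
  then show ?thesis by blast
qed

lemma poset_convex_vimage:
  assumes "poset_convex J" and "mono L"
  shows "poset_convex (L -` J)"
  using assms unfolding poset_convex_def by (blast dest: monoD)

lemma vimage_subset_down_set:
  assumes reflect: "\<And>p q. L p \<le> L q \<Longrightarrow> p \<le> q" and J: "J \<subseteq> down_set (L ` I)"
  shows "L -` J \<subseteq> down_set I"
  using J unfolding down_set_def by (auto dest: reflect split: if_splits)

lemma Omega_eq_components:
  assumes I: "poset_convex I" and K: "poset_convex K"
    and I_above: "I \<subseteq> up_set K" and K_below: "K \<subseteq> down_set I"
  shows "Omega I K = components (I \<inter> K)"
proof -
  have "C \<in> Omega I K" if C: "C \<in> components (I \<inter> K)" for C
  proof -
    have C_sub: "C \<subseteq> I \<inter> K" and "C \<noteq> {}" using C by (auto simp: components_def)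
    then have "I \<noteq> {}" "K \<noteq> {}" by auto
    have "x \<in> C" if x: "x \<in> I" and "x \<le> c" and c: "c \<in> C" for x c
    proof -
      obtain a where "a \<in> K" "a \<le> x"
        using x I_above \<open>K \<noteq> {}\<close> unfolding up_set_def by auto
      then have "x \<in> K" using K C_sub c \<open>x \<le> c\<close> unfolding poset_convex_def by blast
      then show ?thesis
        using components_absorb_comparable[OF C _ c] x \<open>x \<le> c\<close> by (auto simp: comparable_def)
    qed
    moreover have "y \<in> C" if y: "y \<in> K" and "c \<le> y" and c: "c \<in> C" for y c
    proof -
      obtain b where "b \<in> I" "y \<le> b"
        using y K_below \<open>I \<noteq> {}\<close> unfolding down_set_def by auto
      then have "y \<in> I" using I C_sub c \<open>c \<le> y\<close> unfolding poset_convex_def by blast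
      then show ?thesis
        using components_absorb_comparable[OF C _ c] y \<open>c \<le> y\<close> by (auto simp: comparable_def)
    qed
    ultimately show ?thesis
      using C \<open>C \<noteq> {}\<close> unfolding Omega_def up_set_def down_set_def by auto
  qed
  then show ?thesis unfolding Omega_def by auto
qed

lemma Omega_inv_image_eq_components:
  assumes L: "poset_automorphism (Lam e)"
    and I: "poset_convex I" and J: "poset_convex J"
    and IJ: "I \<subseteq> Ex Lam e J" and JI: "J \<subseteq> Ex Lam e I"
  shows "Omega I (inv (Lam e) ` J) = components (I \<inter> inv (Lam e) ` J)"
proof -
  have bij: "bij (Lam e)" and order: "\<And>p q. p \<le> q \<longleftrightarrow> Lam e p \<le> Lam e q"
    using L unfolding poset_automorphism_def by auto
  have "inv (Lam e) ` J = Lam e -` J" by (rule bij_vimage_eq_inv_image[OF bij, symmetric])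
  moreover have "poset_convex (Lam e -` J)"
    using J order by (intro poset_convex_vimage) (auto intro: monoI)
  moreover have "I \<subseteq> up_set (Lam e -` J)" using IJ unfolding Ex_def by auto
  moreover have "Lam e -` J \<subseteq> down_set I"
    using JI order unfolding Ex_def by (intro vimage_subset_down_set) auto
  ultimately show ?thesis using Omega_eq_components[OF I] by simp
qed

theorem lemma2p15:
  fixes Lam :: "real \<Rightarrow> 'a::order \<Rightarrow> 'a" and I J :: "'a set" and e :: real
  assumes "R_action Lam"
    and "is_interval I" and "is_interval J"
    and "e \<ge> 0"
    and "I \<subseteq> Ex Lam e J" and "J \<subseteq> Ex Lam e I"
  shows "Omega I (inv (Lam e) ` J) = components (I \<inter> inv (Lam e) ` J)
       \<and> Omega J (inv (Lam e) ` I) = components (J \<inter> inv (Lam e) ` I)"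
proof -
  have "poset_automorphism (Lam e)" using assms(1,4) unfolding R_action_def by auto
  moreover have "poset_convex I" "poset_convex J"
    using assms(2,3) unfolding is_interval_def by auto
  ultimately show ?thesis
    using assms(5,6) Omega_inv_image_eq_components[of Lam e] by blast
qed

end
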